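(* For a digraph $X$ the following are equivalent: (a) every eigenvalue of $H(X)$ lies in $(-\sqrt{2},\sqrt{2})$; (b) every eigenvalue of $H(X)$ lies in $[-1,1]$; (c) every weakly connected component of $X$ is a single arc, a digon, or an isolated vertex.
   Context: A digraph $X$ has a finite vertex set and an arc set of ordered pairs of distinct vertices; $\{x,y\}$ is a digon if both $xy,yx$ are arcs. The underlying graph $\Gamma(X)$ is the simple graph with an edge $\{x,y\}$ whenever $xy$ or $yx$ is an arc; weakly connected components of $X$ are the sub-digraphs induced on components of $\Gamma(X)$. The Hermitian adjacency matrix $H(X)$ has $(u,v)$-entry $1$ if $uv$ and $vu$ are arcs, $i$ if only $uv$ is an arc, $-i$ if only $vu$ is an arc, and $0$ otherwise. *)

theory Defs
  imports Complex_Main "Jordan_Normal_Form.Char_Poly"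
begin

definition digraph :: "nat \<Rightarrow> (nat \<times> nat) set \<Rightarrow> bool" where
  "digraph n A \<longleftrightarrow> A \<subseteq> {0..<n} \<times> {0..<n} \<and> (\<forall>x. (x, x) \<notin> A)"

definition herm_adj :: "nat \<Rightarrow> (nat \<times> nat) set \<Rightarrow> complex mat" where
  "herm_adj n A = mat n n (\<lambda>(u, v).
     if (u, v) \<in> A \<and> (v, u) \<in> A then 1
     else if (u, v) \<in> A then \<i>
     else if (v, u) \<in> A then - \<i>
     else 0)"

definition underlying_edges :: "(nat \<times> nat) set \<Rightarrow> (nat \<times> nat) set" where
  "underlying_edges A = A \<union> A\<inverse>"

definition weak_components :: "nat \<Rightarrow> (nat \<times> nat) set \<Rightarrow> nat set set" where
  "weak_components n A =
     (\<lambda>v. {w \<in> {0..<n}. (v, w) \<in> (underlying_edges A)\<^sup>*}) ` {0..<n}"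

definition induced_arcs :: "(nat \<times> nat) set \<Rightarrow> nat set \<Rightarrow> (nat \<times> nat) set" where
  "induced_arcs A C = A \<inter> (C \<times> C)"

definition single_arc_or_digon_or_isolated :: "nat set \<Rightarrow> (nat \<times> nat) set \<Rightarrow> bool" where
  "single_arc_or_digon_or_isolated C B \<longleftrightarrow>
     (\<exists>x. C = {x} \<and> B = {}) \<or>
     (\<exists>x y. x \<noteq> y \<and> C = {x, y} \<and> B = {(x, y)}) \<or>
     (\<exists>x y. x \<noteq> y \<and> C = {x, y} \<and> B = {(x, y), (y, x)})"

end

theory Submission
  imports Defs "Jordan_Normal_Form.Spectral_Radius" "HOL-Analysis.Convex"
begin

text \<open>
  If some vertex c has two neighbours a and b, a test vector supported on {c, a, b}, whose
  phases are aligned with the arcs at c, has Rayleigh quotient of modulus at least sqrt 2.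
  For a Hermitian matrix the Rayleigh quotient is bounded by the spectral radius, so (a)
  forces every vertex to have at most one neighbour, which is exactly (c). Then H is a direct
  sum of zero blocks and 2 x 2 blocks [[0, h], [cnj h, 0]] with |h| = 1, so H^3 = H and every
  eigenvalue is 0 or \<plusminus>1, giving (b); and (b) trivially implies (a).

  The Rayleigh bound is proved without the spectral theorem: if |x* H x| \<ge> q |x|^2, then by
  Cauchy-Schwarz |x* H^(2^j) x| = |H^(2^(j-1)) x|^2 \<ge> q^(2^j) |x|^2, whereas the Jordan normal
  form bounds the entries of H^k by C r^k for every r above the spectral radius.
\<close>

definition hermitian_mat :: "complex mat \<Rightarrow> bool" where
  "hermitian_mat H \<longleftrightarrow> (\<forall>i<dim_row H. \<forall>j<dim_row H. H $$ (i, j) = cnj (H $$ (j, i)))"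

definition sq_norm_cvec :: "complex vec \<Rightarrow> real" where
  "sq_norm_cvec x = (\<Sum>i<dim_vec x. (cmod (x $ i))\<^sup>2)"

lemma hermitian_matD:
  assumes "hermitian_mat H" "H \<in> carrier_mat n n" "i < n" "j < n"
  shows "H $$ (i, j) = cnj (H $$ (j, i))"
  using assms unfolding hermitian_mat_def carrier_mat_def by blast

lemma pow_mat_add:
  assumes "A \<in> carrier_mat n n"
  shows "A ^\<^sub>m (k + l) = A ^\<^sub>m k * A ^\<^sub>m l"
proof (induction l)
  case 0
  then show ?case using assms by simp
next
  case (Suc l)
  have "A ^\<^sub>m (k + Suc l) = (A ^\<^sub>m k * A ^\<^sub>m l) * A"
    using Suc by simp
  also have "\<dots> = A ^\<^sub>m k * (A ^\<^sub>m l * A)"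
    using assms by (intro assoc_mult_mat[of _ n n _ n _ n]) auto
  finally show ?case by simp
qed

lemma cscalar_prod_eq_sum:
  assumes "u \<in> carrier_vec n" "v \<in> carrier_vec n"
  shows "u \<bullet>c v = (\<Sum>i<n. u $ i * cnj (v $ i))"
  using assms unfolding scalar_prod_def by (auto intro!: sum.cong)

lemma index_mult_mat_vec_eq_sum:
  assumes "A \<in> carrier_mat n n" "v \<in> carrier_vec n" "i < n"
  shows "(A *\<^sub>v v) $ i = (\<Sum>j<n. A $$ (i, j) * v $ j)"
  using assms by (auto simp: scalar_prod_def atLeast0LessThan intro!: sum.cong)

lemma sq_norm_cvec_nonneg [simp]: "0 \<le> sq_norm_cvec x"
  unfolding sq_norm_cvec_def by (simp add: sum_nonneg)

lemma cscalar_prod_self: "x \<bullet>c x = of_real (sq_norm_cvec x)"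
proof -
  have "\<And>z. z * cnj z = complex_of_real ((cmod z)\<^sup>2)"
    by (rule complex_norm_square[symmetric])
  then show ?thesis
    unfolding cscalar_prod_eq_sum[OF carrier_vec_dim_vec carrier_vec_dim_vec]
      sq_norm_cvec_def of_real_sum
    by simp
qed

lemma cmod_cscalar_prod_squared_le:
  assumes "u \<in> carrier_vec n" "v \<in> carrier_vec n"
  shows "(cmod (u \<bullet>c v))\<^sup>2 \<le> sq_norm_cvec u * sq_norm_cvec v"
proof -
  have "cmod (u \<bullet>c v) \<le> (\<Sum>i<n. cmod (u $ i) * cmod (v $ i))"
    unfolding cscalar_prod_eq_sum[OF assms]
    by (rule order.trans[OF norm_sum]) (simp add: norm_mult)
  then have "(cmod (u \<bullet>c v))\<^sup>2 \<le> (\<Sum>i<n. cmod (u $ i) * cmod (v $ i))\<^sup>2"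
    by (simp add: power_mono)
  also have "\<dots> \<le> sq_norm_cvec u * sq_norm_cvec v"
    unfolding sq_norm_cvec_def using assms by (simp add: Cauchy_Schwarz_ineq_sum)
  finally show ?thesis .
qed

lemma hermitian_mat_cscalar_prod_swap:
  assumes H: "H \<in> carrier_mat n n" "hermitian_mat H"
    and u: "u \<in> carrier_vec n" and v: "v \<in> carrier_vec n"
  shows "(H *\<^sub>v u) \<bullet>c v = u \<bullet>c (H *\<^sub>v v)"
proof -
  note herm = hermitian_matD[OF H(2,1)]
  have "(H *\<^sub>v u) \<bullet>c v = (\<Sum>i<n. (H *\<^sub>v u) $ i * cnj (v $ i))"
    using H u v by (intro cscalar_prod_eq_sum) auto
  also have "\<dots> = (\<Sum>i<n. (\<Sum>j<n. H $$ (i, j) * u $ j) * cnj (v $ i))"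
    using H u v by (intro sum.cong refl, subst index_mult_mat_vec_eq_sum[OF H(1) u]) auto
  also have "\<dots> = (\<Sum>i<n. \<Sum>j<n. H $$ (i, j) * u $ j * cnj (v $ i))"
    by (simp add: sum_distrib_right)
  also have "\<dots> = (\<Sum>j<n. \<Sum>i<n. H $$ (i, j) * u $ j * cnj (v $ i))"
    by (rule sum.swap)
  also have "\<dots> = (\<Sum>j<n. u $ j * cnj (\<Sum>i<n. H $$ (j, i) * v $ i))"
    by (auto simp: sum_distrib_left herm[symmetric] mult.commute mult.left_commute intro!: sum.cong)
  also have "\<dots> = (\<Sum>j<n. u $ j * cnj ((H *\<^sub>v v) $ j))"
    using H u v by (intro sum.cong refl, subst index_mult_mat_vec_eq_sum[OF H(1) v]) auto
  also have "\<dots> = u \<bullet>c (H *\<^sub>v v)"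
    using H u v by (intro cscalar_prod_eq_sum[symmetric]) auto
  finally show ?thesis .
qed

lemma hermitian_mat_pow_cscalar_prod_swap:
  assumes H: "H \<in> carrier_mat n n" "hermitian_mat H"
    and "u \<in> carrier_vec n" "v \<in> carrier_vec n"
  shows "(H ^\<^sub>m k *\<^sub>v u) \<bullet>c v = u \<bullet>c (H ^\<^sub>m k *\<^sub>v v)"
  using assms(3,4)
proof (induction k arbitrary: u v)
  case 0
  then show ?case using H by simp
next
  case (Suc k)
  have Hk: "H ^\<^sub>m k \<in> carrier_mat n n"
    using H by simp
  have left: "H ^\<^sub>m Suc k = H ^\<^sub>m k * H"
    by simp
  have right: "H ^\<^sub>m Suc k = H * H ^\<^sub>m k"
    using pow_mat_add[OF H(1), of 1 k] H by simp
  have "(H ^\<^sub>m Suc k *\<^sub>v u) \<bullet>c v = (H ^\<^sub>m k *\<^sub>v (H *\<^sub>v u)) \<bullet>c v"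
    unfolding left using H Suc by (subst assoc_mult_mat_vec[of _ n n _ n]) auto
  also have "\<dots> = (H *\<^sub>v u) \<bullet>c (H ^\<^sub>m k *\<^sub>v v)"
    using H Suc by (intro Suc.IH) auto
  also have "\<dots> = u \<bullet>c (H *\<^sub>v (H ^\<^sub>m k *\<^sub>v v))"
    by (rule hermitian_mat_cscalar_prod_swap[OF H Suc.prems(1) mult_mat_vec_carrier[OF Hk Suc.prems(2)]])
  also have "H *\<^sub>v (H ^\<^sub>m k *\<^sub>v v) = H ^\<^sub>m Suc k *\<^sub>v v"
    unfolding right using H Suc by (subst assoc_mult_mat_vec[of _ n n _ n]) auto
  finally show ?case .
qed

lemma hermitian_quadratic_form_pow2_ge:
  assumes H: "H \<in> carrier_mat n n" "hermitian_mat H" and x: "x \<in> carrier_vec n"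
    and q: "0 \<le> q" "q * sq_norm_cvec x \<le> cmod ((H *\<^sub>v x) \<bullet>c x)"
  shows "q ^ 2 ^ j * sq_norm_cvec x \<le> cmod ((H ^\<^sub>m 2 ^ j *\<^sub>v x) \<bullet>c x)"
proof (induction j)
  case 0
  then show ?case using H q by simp
next
  case (Suc j)
  define y where "y = H ^\<^sub>m 2 ^ j *\<^sub>v x"
  have y: "y \<in> carrier_vec n"
    unfolding y_def by (rule mult_mat_vec_carrier[OF pow_carrier_mat[OF H(1)] x])
  have "H ^\<^sub>m 2 ^ Suc j = H ^\<^sub>m 2 ^ j * H ^\<^sub>m 2 ^ j"
    using pow_mat_add[OF H(1), of "2 ^ j" "2 ^ j"] by (metis mult_2 power_Suc)
  then have "H ^\<^sub>m 2 ^ Suc j *\<^sub>v x = H ^\<^sub>m 2 ^ j *\<^sub>v y"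
    unfolding y_def using H x by (simp add: assoc_mult_mat_vec[of _ n n _ n])
  then have "(H ^\<^sub>m 2 ^ Suc j *\<^sub>v x) \<bullet>c x = y \<bullet>c y"
    using hermitian_mat_pow_cscalar_prod_swap[OF H y x] by (simp only: y_def)
  then have quad: "cmod ((H ^\<^sub>m 2 ^ Suc j *\<^sub>v x) \<bullet>c x) = sq_norm_cvec y"
    by (simp only: cscalar_prod_self norm_of_real abs_of_nonneg sq_norm_cvec_nonneg)
  have "(q ^ 2 ^ j * sq_norm_cvec x)\<^sup>2 \<le> (cmod (y \<bullet>c x))\<^sup>2"
    using Suc q(1) by (intro power_mono) (auto simp: y_def)
  also have "\<dots> \<le> sq_norm_cvec y * sq_norm_cvec x"
    by (rule cmod_cscalar_prod_squared_le[OF y x])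
  finally have "((q ^ 2 ^ j)\<^sup>2 * sq_norm_cvec x) * sq_norm_cvec x \<le> sq_norm_cvec y * sq_norm_cvec x"
    by (simp add: power2_eq_square mult_ac)
  then have "(q ^ 2 ^ j)\<^sup>2 * sq_norm_cvec x \<le> sq_norm_cvec y"
    by (cases "sq_norm_cvec x = 0") (simp_all add: less_le)
  moreover have "(q ^ 2 ^ j)\<^sup>2 = q ^ 2 ^ Suc j"
    by (simp add: power_mult[symmetric] mult.commute)
  ultimately show ?case
    using quad by simp
qed

lemma smult_mat_mult_mat_vec:
  assumes "A \<in> carrier_mat n m" "v \<in> carrier_vec m"
  shows "(c \<cdot>\<^sub>m A) *\<^sub>v v = c \<cdot>\<^sub>v (A *\<^sub>v v)"
  using assms by (intro eq_vecI) (auto simp: smult_scalar_prod_distrib[of _ m])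

lemma eigenvalue_smult_mat:
  assumes A: "A \<in> carrier_mat n n" and e: "eigenvalue A e"
  shows "eigenvalue (c \<cdot>\<^sub>m A) (c * e)"
proof -
  obtain v where v: "v \<in> carrier_vec n" "v \<noteq> 0\<^sub>v n" "A *\<^sub>v v = e \<cdot>\<^sub>v v"
    using A e unfolding eigenvalue_def eigenvector_def by auto
  have "(c \<cdot>\<^sub>m A) *\<^sub>v v = (c * e) \<cdot>\<^sub>v v"
    using A v by (simp add: smult_mat_mult_mat_vec smult_smult_assoc)
  then show ?thesis
    using A v unfolding eigenvalue_def eigenvector_def by auto
qed

lemma spectral_radius_smult_le:
  assumes A: "A \<in> carrier_mat n n" and n: "0 < n" and c: "c \<noteq> 0"
  shows "spectral_radius (c \<cdot>\<^sub>m A) \<le> cmod c * spectral_radius A"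
proof -
  have cA: "c \<cdot>\<^sub>m A \<in> carrier_mat n n"
    using A by simp
  obtain l where l: "eigenvalue (c \<cdot>\<^sub>m A) l" "spectral_radius (c \<cdot>\<^sub>m A) = cmod l"
    using spectral_radius_mem_max(1)[OF cA n] unfolding spectrum_def by auto
  have "inverse c \<cdot>\<^sub>m (c \<cdot>\<^sub>m A) = A"
    using A c by (intro eq_matI) auto
  then have "eigenvalue A (inverse c * l)"
    using eigenvalue_smult_mat[OF cA l(1), of "inverse c"] by simp
  then have "cmod (inverse c * l) \<le> spectral_radius A"
    using spectral_radius_mem_max(2)[OF A n] unfolding spectrum_def by auto
  moreover have "cmod l = cmod c * cmod (inverse c * l)"
    using c by (simp add: norm_mult norm_inverse)
  ultimately show ?thesis
    using l(2) by (simp add: mult_left_mono)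
qed

lemma cscalar_prod_mult_mat_vec_eq_double_sum:
  assumes A: "A \<in> carrier_mat n n" and x: "x \<in> carrier_vec n"
  shows "(A *\<^sub>v x) \<bullet>c x = (\<Sum>i<n. \<Sum>j<n. A $$ (i, j) * x $ j * cnj (x $ i))"
proof -
  have "(A *\<^sub>v x) \<bullet>c x = (\<Sum>i<n. (A *\<^sub>v x) $ i * cnj (x $ i))"
    using A x by (intro cscalar_prod_eq_sum) auto
  also have "\<dots> = (\<Sum>i<n. \<Sum>j<n. A $$ (i, j) * x $ j * cnj (x $ i))"
    using A x by (auto simp: index_mult_mat_vec_eq_sum sum_distrib_right
        simp del: index_mult_mat_vec intro!: sum.cong)
  finally show ?thesis .
qed

lemma cmod_quadratic_form_le_entry_bound:
  assumes A: "A \<in> carrier_mat n n" and x: "x \<in> carrier_vec n"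
    and bound: "\<And>i j. i < n \<Longrightarrow> j < n \<Longrightarrow> cmod (A $$ (i, j)) \<le> C"
  shows "cmod ((A *\<^sub>v x) \<bullet>c x) \<le> C * (\<Sum>i<n. cmod (x $ i))\<^sup>2"
proof -
  have "cmod ((A *\<^sub>v x) \<bullet>c x) \<le> (\<Sum>i<n. \<Sum>j<n. cmod (A $$ (i, j) * x $ j * cnj (x $ i)))"
    unfolding cscalar_prod_mult_mat_vec_eq_double_sum[OF A x]
    by (rule order.trans[OF norm_sum sum_mono[OF norm_sum]])
  also have "\<dots> \<le> (\<Sum>i<n. \<Sum>j<n. C * (cmod (x $ j) * cmod (x $ i)))"
    using bound by (intro sum_mono) (simp add: norm_mult mult.assoc mult_right_mono)
  also have "\<dots> = C * (\<Sum>i<n. cmod (x $ i))\<^sup>2"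
    by (simp add: power2_eq_square sum_product sum_distrib_left mult_ac)
  finally show ?thesis .
qed

lemma hermitian_quadratic_form_le_if_bounded_powers:
  assumes B: "B \<in> carrier_mat n n" "hermitian_mat B" and x: "x \<in> carrier_vec n"
    and bounded: "\<And>k. norm_bound (B ^\<^sub>m k) C"
  shows "cmod ((B *\<^sub>v x) \<bullet>c x) \<le> sq_norm_cvec x"
proof (rule ccontr)
  define S where "S = sq_norm_cvec x"
  define q where "q = cmod ((B *\<^sub>v x) \<bullet>c x) / S"
  define M where "M = (\<Sum>i<n. cmod (x $ i))\<^sup>2"
  assume "\<not> cmod ((B *\<^sub>v x) \<bullet>c x) \<le> sq_norm_cvec x"
  then have gt: "S < cmod ((B *\<^sub>v x) \<bullet>c x)"
    unfolding S_def by simp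
  have "(cmod ((B *\<^sub>v x) \<bullet>c x))\<^sup>2 \<le> sq_norm_cvec (B *\<^sub>v x) * S"
    unfolding S_def using B x by (intro cmod_cscalar_prod_squared_le[of _ n]) auto
  then have S: "0 < S"
    using gt sq_norm_cvec_nonneg[of x] unfolding S_def
    by (cases "sq_norm_cvec x = 0") (auto simp: less_le)
  then have q: "1 < q" "q * S = cmod ((B *\<^sub>v x) \<bullet>c x)"
    using gt by (simp_all add: q_def field_simps)
  have growth: "q ^ 2 ^ j * S \<le> C * M" for j
  proof -
    have "q ^ 2 ^ j * S \<le> cmod ((B ^\<^sub>m 2 ^ j *\<^sub>v x) \<bullet>c x)"
      unfolding S_def using q by (intro hermitian_quadratic_form_pow2_ge[OF B x]) (simp_all add: S_def)
    also have "\<dots> \<le> C * M"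
      unfolding M_def using bounded[of "2 ^ j"] B
      by (intro cmod_quadratic_form_le_entry_bound[OF _ x]) (auto simp: norm_bound_def)
    finally show ?thesis .
  qed
  obtain N where N: "C * M / S < q ^ N"
    using real_arch_pow[OF q(1)] by blast
  have "q ^ N \<le> q ^ 2 ^ N"
    using q(1) by (intro power_increasing) (auto intro: less_imp_le less_exp)
  then have "q ^ N * S \<le> q ^ 2 ^ N * S"
    using S by (simp add: mult_right_mono)
  moreover have "C * M < q ^ N * S"
    using N S by (simp add: divide_less_eq)
  ultimately show False
    using growth[of N] by linarith
qed

lemma hermitian_mat_smult_real:
  assumes H: "H \<in> carrier_mat n n" "hermitian_mat H"
  shows "hermitian_mat (complex_of_real c \<cdot>\<^sub>m H)"
  unfolding hermitian_mat_def
proof (intro allI impI)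
  fix i j
  assume "i < dim_row (complex_of_real c \<cdot>\<^sub>m H)" "j < dim_row (complex_of_real c \<cdot>\<^sub>m H)"
  then have ij: "i < n" "j < n"
    using H by auto
  have "H $$ (i, j) = cnj (H $$ (j, i))"
    by (rule hermitian_matD[OF H(2,1) ij])
  then show "(complex_of_real c \<cdot>\<^sub>m H) $$ (i, j) = cnj ((complex_of_real c \<cdot>\<^sub>m H) $$ (j, i))"
    using H ij by simp
qed

lemma hermitian_quadratic_form_le_above_spectral_radius:
  assumes H: "H \<in> carrier_mat n n" "hermitian_mat H" and x: "x \<in> carrier_vec n"
    and n: "0 < n" and r: "spectral_radius H < r"
  shows "cmod ((H *\<^sub>v x) \<bullet>c x) \<le> r * sq_norm_cvec x"
proof -
  have "0 \<le> spectral_radius H"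
    using spectral_radius_mem_max(1)[OF H(1) n] by auto
  with r have r0: "0 < r"
    by linarith
  define B where "B = complex_of_real (inverse r) \<cdot>\<^sub>m H"
  have B: "B \<in> carrier_mat n n" "hermitian_mat B"
    unfolding B_def using H(1) hermitian_mat_smult_real[OF H, of "inverse r"] by simp_all
  have "spectral_radius B \<le> cmod (complex_of_real (inverse r)) * spectral_radius H"
    unfolding B_def using r0 by (intro spectral_radius_smult_le[OF H(1) n]) auto
  also have "\<dots> = inverse r * spectral_radius H"
    using r0 by (simp add: norm_inverse)
  also have "\<dots> < 1"
    using r r0 by (simp add: field_simps)
  finally obtain C where "\<And>k. norm_bound (B ^\<^sub>m k) C"
    using spectral_radius_jnf_norm_bound_less_1_upper_triangular[OF B(1)] by blast
  then have "cmod ((B *\<^sub>v x) \<bullet>c x) \<le> sq_norm_cvec x"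
    by (rule hermitian_quadratic_form_le_if_bounded_powers[OF B x])
  moreover have "(B *\<^sub>v x) \<bullet>c x = complex_of_real (inverse r) * ((H *\<^sub>v x) \<bullet>c x)"
    unfolding B_def using H x by (simp add: smult_mat_mult_mat_vec[of _ n n])
  then have "cmod ((B *\<^sub>v x) \<bullet>c x) = inverse r * cmod ((H *\<^sub>v x) \<bullet>c x)"
    using r0 by (simp only: norm_mult norm_of_real abs_inverse abs_of_pos)
  ultimately have "inverse r * cmod ((H *\<^sub>v x) \<bullet>c x) \<le> sq_norm_cvec x"
    by linarith
  then show ?thesis
    using r0 by (simp add: field_simps)
qed

theorem hermitian_quadratic_form_le_spectral_radius:
  assumes H: "H \<in> carrier_mat n n" "hermitian_mat H" and x: "x \<in> carrier_vec n"
  shows "cmod ((H *\<^sub>v x) \<bullet>c x) \<le> spectral_radius H * sq_norm_cvec x"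
proof (cases "n = 0")
  case True
  then have "(H *\<^sub>v x) \<bullet>c x = 0"
    using cscalar_prod_eq_sum[of "H *\<^sub>v x" n x] H x by simp
  moreover have "sq_norm_cvec x = 0"
    using True x by (simp add: sq_norm_cvec_def)
  ultimately show ?thesis
    by simp
next
  case False
  note above = hermitian_quadratic_form_le_above_spectral_radius[OF H x]
  show ?thesis
  proof (cases "sq_norm_cvec x = 0")
    case True
    then show ?thesis
      using above[of "spectral_radius H + 1"] False by simp
  next
    case False
    then have S: "0 < sq_norm_cvec x"
      using sq_norm_cvec_nonneg[of x] by linarith
    have "cmod ((H *\<^sub>v x) \<bullet>c x) / sq_norm_cvec x \<le> spectral_radius H"
    proof (rule dense_ge)
      fix r
      assume "spectral_radius H < r"
      then show "cmod ((H *\<^sub>v x) \<bullet>c x) / sq_norm_cvec x \<le> r"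
        using above \<open>n \<noteq> 0\<close> by (simp add: pos_divide_le_eq[OF S])
    qed
    then show ?thesis
      by (simp add: pos_divide_le_eq[OF S])
  qed
qed

lemma herm_adj_carrier [simp]: "herm_adj n A \<in> carrier_mat n n"
  unfolding herm_adj_def by simp

lemma herm_adj_index:
  assumes "i < n" "j < n"
  shows "herm_adj n A $$ (i, j) =
    (if (i, j) \<in> A \<and> (j, i) \<in> A then 1 else if (i, j) \<in> A then \<i>
     else if (j, i) \<in> A then - \<i> else 0)"
  using assms unfolding herm_adj_def by simp

lemma hermitian_herm_adj: "hermitian_mat (herm_adj n A)"
  unfolding hermitian_mat_def herm_adj_def by auto

lemma herm_adj_eq_0:
  "i < n \<Longrightarrow> j < n \<Longrightarrow> (i, j) \<notin> underlying_edges A \<Longrightarrow> herm_adj n A $$ (i, j) = 0"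
  by (simp add: herm_adj_index underlying_edges_def)

lemma herm_adj_mult_transpose_entry:
  "i < n \<Longrightarrow> j < n \<Longrightarrow> (i, j) \<in> underlying_edges A \<Longrightarrow>
    herm_adj n A $$ (i, j) * herm_adj n A $$ (j, i) = 1"
  by (auto simp: herm_adj_index underlying_edges_def)

lemma underlying_edges_sym: "(i, j) \<in> underlying_edges A \<Longrightarrow> (j, i) \<in> underlying_edges A"
  unfolding underlying_edges_def by auto

lemma underlying_edge_in_range:
  assumes "digraph n A" "(i, j) \<in> underlying_edges A"
  shows "i < n" "j < n" "i \<noteq> j"
  using assms unfolding digraph_def underlying_edges_def by auto

definition degree_at_most_one :: "(nat \<times> nat) set \<Rightarrow> bool" where
  "degree_at_most_one A \<longleftrightarrow>
     (\<forall>i j k. (i, j) \<in> underlying_edges A \<longrightarrow> (i, k) \<in> underlying_edges A \<longrightarrow> j = k)"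

lemma degree_at_most_one_if_components:
  assumes dg: "digraph n A"
    and comps: "\<forall>C\<in>weak_components n A. single_arc_or_digon_or_isolated C (induced_arcs A C)"
  shows "degree_at_most_one A"
  unfolding degree_at_most_one_def
proof (intro allI impI)
  fix i j k
  assume ij: "(i, j) \<in> underlying_edges A" and ik: "(i, k) \<in> underlying_edges A"
  have i: "i < n" and j: "j < n" "i \<noteq> j" and k: "k < n" "i \<noteq> k"
    using underlying_edge_in_range[OF dg ij] underlying_edge_in_range[OF dg ik] by auto
  define C where "C = {w \<in> {0..<n}. (i, w) \<in> (underlying_edges A)\<^sup>*}"
  have "C \<in> weak_components n A"
    unfolding weak_components_def C_def using i by auto
  then have "single_arc_or_digon_or_isolated C (induced_arcs A C)"
    using comps by blast
  moreover have "i \<in> C" "j \<in> C" "k \<in> C"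
    unfolding C_def using i j k ij ik by auto
  ultimately show "j = k"
    using j(2) k(2) unfolding single_arc_or_digon_or_isolated_def by auto
qed

lemma rtrancl_underlying_edges_degree_at_most_one:
  assumes deg: "degree_at_most_one A" and "(v, w) \<in> (underlying_edges A)\<^sup>*"
  shows "w = v \<or> (v, w) \<in> underlying_edges A"
  using assms(2)
proof (induction rule: rtrancl_induct)
  case base
  then show ?case by simp
next
  case (step y z)
  show ?case
  proof (cases "y = v")
    case True
    then show ?thesis using step.hyps(2) by simp
  next
    case False
    then have "(y, v) \<in> underlying_edges A"
      using step.IH underlying_edges_sym by blast
    then have "z = v"
      using step.hyps(2) deg unfolding degree_at_most_one_def by blast
    then show ?thesis by simp
  qed
qed

lemma single_arc_or_digon_or_isolated_pair:
  assumes xy: "x \<noteq> y" and B: "B \<subseteq> {(x, y), (y, x)}" "B \<noteq> {}"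
  shows "single_arc_or_digon_or_isolated {x, y} B"
proof (cases "(y, x) \<in> B")
  case yx: True
  show ?thesis
  proof (cases "(x, y) \<in> B")
    case True
    then have "B = {(x, y), (y, x)}"
      using yx B by auto
    then show ?thesis
      using xy unfolding single_arc_or_digon_or_isolated_def by blast
  next
    case False
    then have "B = {(y, x)}" "{x, y} = {y, x}"
      using yx B by auto
    then show ?thesis
      using xy unfolding single_arc_or_digon_or_isolated_def
      by (intro disjI2 disjI1 exI[of _ y] exI[of _ x]) simp
  qed
next
  case False
  then have "B = {(x, y)}"
    using B by auto
  then show ?thesis
    using xy unfolding single_arc_or_digon_or_isolated_def by blast
qed

lemma weak_component_degree_at_most_one:
  assumes dg: "digraph n A" and deg: "degree_at_most_one A" and C: "C \<in> weak_components n A"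
  shows "single_arc_or_digon_or_isolated C (induced_arcs A C)"
proof -
  obtain v where v: "v < n" and C_def: "C = {w \<in> {0..<n}. (v, w) \<in> (underlying_edges A)\<^sup>*}"
    using C unfolding weak_components_def by auto
  have C_eq: "C = insert v {w. (v, w) \<in> underlying_edges A}"
  proof
    show "C \<subseteq> insert v {w. (v, w) \<in> underlying_edges A}"
      unfolding C_def using rtrancl_underlying_edges_degree_at_most_one[OF deg] by blast
    show "insert v {w. (v, w) \<in> underlying_edges A} \<subseteq> C"
      unfolding C_def using v underlying_edge_in_range(2)[OF dg] by auto
  qed
  have loopfree: "(x, x) \<notin> A" for x
    using dg unfolding digraph_def by blast
  show ?thesis
  proof (cases "\<exists>w. (v, w) \<in> underlying_edges A")
    case False
    then have "C = {v}"
      using C_eq by auto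
    then show ?thesis
      using loopfree unfolding single_arc_or_digon_or_isolated_def induced_arcs_def by auto
  next
    case True
    then obtain w where vw: "(v, w) \<in> underlying_edges A" ..
    then have "C = {v, w}"
      using C_eq deg unfolding degree_at_most_one_def by auto
    moreover have "v \<noteq> w"
      using underlying_edge_in_range[OF dg vw] by simp
    moreover have "induced_arcs A {v, w} \<subseteq> {(v, w), (w, v)}"
      using loopfree unfolding induced_arcs_def by auto
    moreover have "induced_arcs A {v, w} \<noteq> {}"
      using vw unfolding induced_arcs_def underlying_edges_def by auto
    ultimately show ?thesis
      using single_arc_or_digon_or_isolated_pair by simp
  qed
qed

lemma herm_adj_mult_vec_neighbour:
  assumes dg: "digraph n A" and deg: "degree_at_most_one A"
    and ij: "(i, j) \<in> underlying_edges A" and u: "u \<in> carrier_vec n"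
  shows "(herm_adj n A *\<^sub>v u) $ i = herm_adj n A $$ (i, j) * u $ j"
proof -
  have i: "i < n" and j: "j < n"
    using underlying_edge_in_range[OF dg ij] by auto
  have "(herm_adj n A *\<^sub>v u) $ i = (\<Sum>k<n. herm_adj n A $$ (i, k) * u $ k)"
    by (rule index_mult_mat_vec_eq_sum[OF herm_adj_carrier u i])
  also have "\<dots> = (\<Sum>k<n. if k = j then herm_adj n A $$ (i, j) * u $ j else 0)"
  proof (rule sum.cong[OF refl])
    fix k
    assume "k \<in> {..<n}"
    moreover have "(i, k) \<notin> underlying_edges A" if "k \<noteq> j"
      using deg ij that unfolding degree_at_most_one_def by blast
    ultimately show "herm_adj n A $$ (i, k) * u $ k = (if k = j then herm_adj n A $$ (i, j) * u $ j else 0)"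
      using i by (auto simp: herm_adj_eq_0)
  qed
  also have "\<dots> = herm_adj n A $$ (i, j) * u $ j"
    using j by simp
  finally show ?thesis .
qed

lemma herm_adj_mult_vec_isolated:
  assumes i: "i < n" and isolated: "\<And>j. (i, j) \<notin> underlying_edges A" and u: "u \<in> carrier_vec n"
  shows "(herm_adj n A *\<^sub>v u) $ i = 0"
  using index_mult_mat_vec_eq_sum[OF herm_adj_carrier u i] i isolated by (simp add: herm_adj_eq_0)

lemma herm_adj_cube:
  assumes dg: "digraph n A" and deg: "degree_at_most_one A" and v: "v \<in> carrier_vec n"
  shows "herm_adj n A *\<^sub>v (herm_adj n A *\<^sub>v (herm_adj n A *\<^sub>v v)) = herm_adj n A *\<^sub>v v"
    (is "?H *\<^sub>v (?H *\<^sub>v (?H *\<^sub>v v)) = _")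
proof (rule eq_vecI)
  have Hv: "?H *\<^sub>v v \<in> carrier_vec n"
    by (rule mult_mat_vec_carrier[OF herm_adj_carrier v])
  then have HHv: "?H *\<^sub>v (?H *\<^sub>v v) \<in> carrier_vec n"
    by (rule mult_mat_vec_carrier[OF herm_adj_carrier])
  fix i
  assume "i < dim_vec (?H *\<^sub>v v)"
  then have i: "i < n"
    by (simp add: herm_adj_def)
  show "(?H *\<^sub>v (?H *\<^sub>v (?H *\<^sub>v v))) $ i = (?H *\<^sub>v v) $ i"
  proof (cases "\<exists>j. (i, j) \<in> underlying_edges A")
    case False
    then have isolated: "\<And>j. (i, j) \<notin> underlying_edges A"
      by blast
    show ?thesis
      using herm_adj_mult_vec_isolated[OF i isolated HHv] herm_adj_mult_vec_isolated[OF i isolated v]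
      by (simp only:)
  next
    case True
    then obtain j where ij: "(i, j) \<in> underlying_edges A" ..
    have j: "j < n"
      using underlying_edge_in_range[OF dg ij] by simp
    have "(?H *\<^sub>v (?H *\<^sub>v (?H *\<^sub>v v))) $ i = ?H $$ (i, j) * ((?H *\<^sub>v (?H *\<^sub>v v)) $ j)"
      by (rule herm_adj_mult_vec_neighbour[OF dg deg ij HHv])
    also have "(?H *\<^sub>v (?H *\<^sub>v v)) $ j = ?H $$ (j, i) * (?H *\<^sub>v v) $ i"
      by (rule herm_adj_mult_vec_neighbour[OF dg deg underlying_edges_sym[OF ij] Hv])
    finally have "(?H *\<^sub>v (?H *\<^sub>v (?H *\<^sub>v v))) $ i = (?H $$ (i, j) * ?H $$ (j, i)) * (?H *\<^sub>v v) $ i"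
      by (simp only: mult.assoc)
    then show ?thesis
      unfolding herm_adj_mult_transpose_entry[OF i j ij] by simp
  qed
qed (use v in simp)

lemma eigenvalue_if_cube_identity:
  fixes A :: "'a :: field mat"
  assumes A: "A \<in> carrier_mat n n"
    and cube: "\<And>v. v \<in> carrier_vec n \<Longrightarrow> A *\<^sub>v (A *\<^sub>v (A *\<^sub>v v)) = A *\<^sub>v v"
    and e: "eigenvalue A e"
  shows "e \<in> {-1, 0, 1}"
proof -
  obtain v where v: "v \<in> carrier_vec n" "v \<noteq> 0\<^sub>v n" and Av: "A *\<^sub>v v = e \<cdot>\<^sub>v v"
    using A e unfolding eigenvalue_def eigenvector_def by auto
  have "A *\<^sub>v (A *\<^sub>v (A *\<^sub>v v)) = (e * (e * e)) \<cdot>\<^sub>v v"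
    using v(1) by (simp add: Av mult_mat_vec[OF A] smult_smult_assoc mult.assoc)
  then have "(e * (e * e)) \<cdot>\<^sub>v v = e \<cdot>\<^sub>v v"
    using cube[OF v(1)] Av by simp
  moreover obtain i where i: "i < n" "v $ i \<noteq> 0"
  proof -
    have "\<exists>i<n. v $ i \<noteq> 0"
    proof (rule ccontr)
      assume "\<not> (\<exists>i<n. v $ i \<noteq> 0)"
      then have "v = 0\<^sub>v n"
        using v(1) by (intro eq_vecI) auto
      with v(2) show False ..
    qed
    then show ?thesis
      using that by blast
  qed
  ultimately have "((e * (e * e)) \<cdot>\<^sub>v v) $ i = (e \<cdot>\<^sub>v v) $ i"
    by simp
  then have "e * (e * e) * v $ i = e * v $ i"
    using i(1) v(1) by simp
  then have "e * (e * e) = e"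
    using i(2) by simp
  then have "e * (e - 1) * (e + 1) = 0"
    by (simp add: algebra_simps)
  then have "e = 0 \<or> e - 1 = 0 \<or> e + 1 = 0"
    by simp
  then show ?thesis
    by (auto simp: eq_neg_iff_add_eq_0)
qed

lemma eigenvalues_herm_adj_degree_at_most_one:
  assumes "digraph n A" "degree_at_most_one A" "eigenvalue (herm_adj n A) e"
  shows "e \<in> {-1, 0, 1}"
  using eigenvalue_if_cube_identity[OF herm_adj_carrier herm_adj_cube[OF assms(1,2)] assms(3)] .

lemma cscalar_prod_mult_mat_vec_supported:
  assumes A: "A \<in> carrier_mat n n" and x: "x \<in> carrier_vec n"
    and S: "S \<subseteq> {..<n}" and zero: "\<And>i. i < n \<Longrightarrow> i \<notin> S \<Longrightarrow> x $ i = 0"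
  shows "(A *\<^sub>v x) \<bullet>c x = (\<Sum>i\<in>S. \<Sum>j\<in>S. A $$ (i, j) * x $ j * cnj (x $ i))"
proof -
  have "(A *\<^sub>v x) \<bullet>c x = (\<Sum>i<n. \<Sum>j\<in>S. A $$ (i, j) * x $ j * cnj (x $ i))"
    unfolding cscalar_prod_mult_mat_vec_eq_double_sum[OF A x]
    using S zero by (intro sum.cong refl sum.mono_neutral_right) auto
  also have "\<dots> = (\<Sum>i\<in>S. \<Sum>j\<in>S. A $$ (i, j) * x $ j * cnj (x $ i))"
    using S zero by (intro sum.mono_neutral_right) auto
  finally show ?thesis .
qed

lemma sq_norm_cvec_supported:
  assumes x: "x \<in> carrier_vec n"
    and S: "S \<subseteq> {..<n}" and zero: "\<And>i. i < n \<Longrightarrow> i \<notin> S \<Longrightarrow> x $ i = 0"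
  shows "sq_norm_cvec x = (\<Sum>i\<in>S. (cmod (x $ i))\<^sup>2)"
  unfolding sq_norm_cvec_def using x S zero by (intro sum.mono_neutral_right) auto

text \<open>The phases of the entries at a and b undo those of the arcs at c, so each of the four
  terms of the quadratic form through c equals s sqrt 2; the sign s is chosen afterwards to
  make the remaining a-b term nonnegative.\<close>

definition star_test_vec :: "nat \<Rightarrow> complex mat \<Rightarrow> nat \<Rightarrow> nat \<Rightarrow> nat \<Rightarrow> real \<Rightarrow> complex vec" where
  "star_test_vec n H c a b s = vec n (\<lambda>i.
     if i = c then complex_of_real (sqrt 2)
     else if i = a then complex_of_real s * cnj (H $$ (c, a))
     else if i = b then complex_of_real s * cnj (H $$ (c, b))
     else 0)"

lemma star_test_vec_carrier: "star_test_vec n H c a b s \<in> carrier_vec n"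
  unfolding star_test_vec_def by simp

lemma star_test_vec_outside:
  "i < n \<Longrightarrow> i \<notin> {c, a, b} \<Longrightarrow> star_test_vec n H c a b s $ i = 0"
  unfolding star_test_vec_def by simp

lemma star_test_vec_index:
  assumes "c < n" "a < n" "b < n" "c \<noteq> a" "c \<noteq> b" "a \<noteq> b"
  shows "star_test_vec n H c a b s $ c = complex_of_real (sqrt 2)"
    and "star_test_vec n H c a b s $ a = complex_of_real s * cnj (H $$ (c, a))"
    and "star_test_vec n H c a b s $ b = complex_of_real s * cnj (H $$ (c, b))"
  using assms unfolding star_test_vec_def by auto

lemma sq_norm_star_test_vec:
  assumes abc: "c < n" "a < n" "b < n" "c \<noteq> a" "c \<noteq> b" "a \<noteq> b"
    and unit: "cmod (H $$ (c, a)) = 1" "cmod (H $$ (c, b)) = 1" and s: "s \<in> {-1, 1}"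
  shows "sq_norm_cvec (star_test_vec n H c a b s) = 4"
proof -
  have "sq_norm_cvec (star_test_vec n H c a b s) = (\<Sum>i\<in>{c, a, b}. (cmod (star_test_vec n H c a b s $ i))\<^sup>2)"
    using abc by (intro sq_norm_cvec_supported[OF star_test_vec_carrier _ star_test_vec_outside]) auto
  also have "\<dots> = 4"
    using abc unit s by (auto simp: star_test_vec_index[OF abc] norm_mult)
  finally show ?thesis .
qed

lemma quadratic_form_star_test_vec:
  assumes H: "H \<in> carrier_mat n n" "hermitian_mat H"
    and abc: "c < n" "a < n" "b < n" "c \<noteq> a" "c \<noteq> b" "a \<noteq> b"
    and diag: "H $$ (c, c) = 0" "H $$ (a, a) = 0" "H $$ (b, b) = 0"
    and unit: "cmod (H $$ (c, a)) = 1" "cmod (H $$ (c, b)) = 1" and s: "s \<in> {-1, 1}"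
  defines "x \<equiv> star_test_vec n H c a b s"
  shows "(H *\<^sub>v x) \<bullet>c x
    = complex_of_real (4 * s * sqrt 2 + 2 * Re (H $$ (a, b) * H $$ (c, a) * cnj (H $$ (c, b))))"
proof -
  define h1 where "h1 = H $$ (c, a)"
  define h2 where "h2 = H $$ (c, b)"
  define g where "g = H $$ (a, b)"
  have h: "h1 * cnj h1 = 1" "h2 * cnj h2 = 1"
    using unit unfolding h1_def h2_def by (simp_all flip: complex_norm_square)
  have ss: "complex_of_real s * complex_of_real s = 1"
    using s by auto
  note H_cnj = hermitian_matD[OF H(2,1)]
  have "(H *\<^sub>v x) \<bullet>c x = (\<Sum>i\<in>{c, a, b}. \<Sum>j\<in>{c, a, b}. H $$ (i, j) * x $ j * cnj (x $ i))"
    unfolding x_def using abc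
    by (intro cscalar_prod_mult_mat_vec_supported[OF H(1) star_test_vec_carrier _ star_test_vec_outside])
      auto
  also have "\<dots> = complex_of_real s * complex_of_real (sqrt 2) * (2 * (h1 * cnj h1) + 2 * (h2 * cnj h2))
      + complex_of_real s * complex_of_real s * (g * h1 * cnj h2 + cnj (g * h1 * cnj h2))"
    using abc
    by (simp add: x_def star_test_vec_index[OF abc] diag H_cnj[of a c] H_cnj[of b c] H_cnj[of b a]
        algebra_simps flip: h1_def h2_def g_def)
  also have "\<dots> = complex_of_real (4 * s * sqrt 2 + 2 * Re (g * h1 * cnj h2))"
    unfolding h ss complex_add_cnj by simp
  finally show ?thesis
    unfolding g_def h1_def h2_def .
qed

lemma cmod_herm_adj_edge:
  "i < n \<Longrightarrow> j < n \<Longrightarrow> (i, j) \<in> underlying_edges A \<Longrightarrow> cmod (herm_adj n A $$ (i, j)) = 1"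
  by (auto simp: herm_adj_index underlying_edges_def)

lemma herm_adj_diag: "digraph n A \<Longrightarrow> i < n \<Longrightarrow> herm_adj n A $$ (i, i) = 0"
  by (auto simp: herm_adj_index digraph_def)

lemma herm_adj_star_witness:
  assumes dg: "digraph n A" and ca: "(c, a) \<in> underlying_edges A"
    and cb: "(c, b) \<in> underlying_edges A" and ab: "a \<noteq> b"
  obtains x where "x \<in> carrier_vec n" "0 < sq_norm_cvec x"
    "sqrt 2 * sq_norm_cvec x \<le> cmod ((herm_adj n A *\<^sub>v x) \<bullet>c x)"
proof -
  let ?H = "herm_adj n A"
  have abc: "c < n" "a < n" "b < n" "c \<noteq> a" "c \<noteq> b" "a \<noteq> b"
    using underlying_edge_in_range[OF dg ca] underlying_edge_in_range[OF dg cb] ab by auto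
  have unit: "cmod (?H $$ (c, a)) = 1" "cmod (?H $$ (c, b)) = 1"
    using abc ca cb by (simp_all add: cmod_herm_adj_edge)
  define t where "t = Re (?H $$ (a, b) * ?H $$ (c, a) * cnj (?H $$ (c, b)))"
  define s :: real where "s = (if 0 \<le> t then 1 else - 1)"
  have s: "s \<in> {-1, 1}" "s * s = 1" "\<bar>s\<bar> = 1" "0 \<le> s * t"
    unfolding s_def by auto
  define x where "x = star_test_vec n ?H c a b s"
  have norm: "sq_norm_cvec x = 4"
    unfolding x_def by (rule sq_norm_star_test_vec[OF abc unit s(1)])
  have quad: "(?H *\<^sub>v x) \<bullet>c x = complex_of_real (4 * s * sqrt 2 + 2 * t)"
    unfolding x_def t_def using abc
    by (intro quadratic_form_star_test_vec[OF herm_adj_carrier hermitian_herm_adj abc _ _ _ unit s(1)])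
      (simp_all add: herm_adj_diag[OF dg])
  have "sqrt 2 * sq_norm_cvec x = s * (4 * s * sqrt 2 + 2 * t) - 2 * (s * t)"
    using norm s(2) by (simp add: algebra_simps)
  also have "\<dots> \<le> \<bar>4 * s * sqrt 2 + 2 * t\<bar>"
    using s(3,4) abs_ge_self[of "s * (4 * s * sqrt 2 + 2 * t)"] by (simp add: abs_mult)
  also have "\<dots> = cmod ((?H *\<^sub>v x) \<bullet>c x)"
    by (simp only: quad norm_of_real)
  finally show ?thesis
    using that[OF star_test_vec_carrier[of n ?H c a b s, folded x_def]] norm by simp
qed

lemma degree_at_most_one_if_eigenvalues_less_sqrt2:
  assumes dg: "digraph n A" and ev: "\<And>e. eigenvalue (herm_adj n A) e \<Longrightarrow> cmod e < sqrt 2"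
  shows "degree_at_most_one A"
  unfolding degree_at_most_one_def
proof (intro allI impI)
  fix c a b
  assume ca: "(c, a) \<in> underlying_edges A" and cb: "(c, b) \<in> underlying_edges A"
  show "a = b"
  proof (rule ccontr)
    assume "a \<noteq> b"
    then obtain x where x: "x \<in> carrier_vec n" "0 < sq_norm_cvec x"
      and big: "sqrt 2 * sq_norm_cvec x \<le> cmod ((herm_adj n A *\<^sub>v x) \<bullet>c x)"
      using herm_adj_star_witness[OF dg ca cb] by blast
    have "0 < n"
      using underlying_edge_in_range[OF dg ca] by simp
    then obtain e where "eigenvalue (herm_adj n A) e" "spectral_radius (herm_adj n A) = cmod e"
      using spectral_radius_mem_max(1)[OF herm_adj_carrier] unfolding spectrum_def by auto
    then have "spectral_radius (herm_adj n A) < sqrt 2"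
      using ev by simp
    then have "spectral_radius (herm_adj n A) * sq_norm_cvec x < sqrt 2 * sq_norm_cvec x"
      using x(2) by simp
    with big show False
      using hermitian_quadratic_form_le_spectral_radius[OF herm_adj_carrier hermitian_herm_adj[of n A] x(1)]
      by linarith
  qed
qed

theorem theorem9p2:
  fixes n :: nat and A :: "(nat \<times> nat) set"
  assumes "digraph n A"
  shows "((\<forall>e. eigenvalue (herm_adj n A) e \<longrightarrow>
              e \<in> complex_of_real ` {- sqrt 2 <..< sqrt 2})
          \<longleftrightarrow> (\<forall>e. eigenvalue (herm_adj n A) e \<longrightarrow>
              e \<in> complex_of_real ` {- 1 .. 1}))
       \<and> ((\<forall>e. eigenvalue (herm_adj n A) e \<longrightarrow>
              e \<in> complex_of_real ` {- 1 .. 1})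
          \<longleftrightarrow> (\<forall>C \<in> weak_components n A.
                 single_arc_or_digon_or_isolated C (induced_arcs A C)))"
proof -
  let ?ev = "\<lambda>I. \<forall>e. eigenvalue (herm_adj n A) e \<longrightarrow> e \<in> complex_of_real ` I"
  have "?ev {- sqrt 2 <..< sqrt 2} \<Longrightarrow> degree_at_most_one A"
    by (rule degree_at_most_one_if_eigenvalues_less_sqrt2[OF assms]) (force simp: abs_less_iff)
  moreover have "degree_at_most_one A \<Longrightarrow> ?ev {- 1 .. 1}"
    using eigenvalues_herm_adj_degree_at_most_one[OF assms] by force
  moreover have "1 < sqrt (2 :: real)"
    by simp
  then have "?ev {- 1 .. 1} \<Longrightarrow> ?ev {- sqrt 2 <..< sqrt 2}"
    by (force simp del: real_sqrt_gt_1_iff)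
  moreover have "degree_at_most_one A \<longleftrightarrow>
      (\<forall>C \<in> weak_components n A. single_arc_or_digon_or_isolated C (induced_arcs A C))"
    using degree_at_most_one_if_components weak_component_degree_at_most_one assms by blast
  ultimately show ?thesis
    by blast
qed

end
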